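(* Suppose the p-values are conditionally super-uniform: for every $t$ with $\theta_t=0$, $\mathbb{P}(p_t\le U\mid\mathcal{F}_{t-1})\le U$ a.s. for every $\mathcal F_{t-1}$-measurable $[0,1]$-valued $U$. (a) If the $\mathcal{F}_{t-1}$-measurable testing levels satisfy, a.s. for every $t\ge1$, $\widehat{\mathrm{FDP}}^{\mathrm{pL\text{-}RAI}}(t):=\sum_{j=1}^t\frac{\alpha_j}{R_{j-1}+1}\le\alpha$, then $\mathrm{FDR}(t)\le\alpha$ for all $t$. (b) Let $(\lambda_t)_{t\ge1}$ be $(0,1)$-valued with each $\lambda_t$ $\mathcal{F}_{t-1}$-measurable, and let $\widehat{\mathrm{FDP}}^{\mathrm{pS\text{-}RAI}}(t):=\sum_{j=1}^t\frac{\alpha_j}{R_{j-1}+1}\cdot\frac{\mathbb{1}\{p_j>\lambda_j\}}{1-\lambda_j}$. Then (i) $\mathbb{E}[\widehat{\mathrm{FDP}}^{\mathrm{pS\text{-}RAI}}(t)]\ge\mathbb{E}[\mathrm{FDP}^*_{\mathrm{e}}(t)]$ for all $t$, where $\mathrm{FDP}^*_{\mathrm{e}}(t)=\sum_{j\in\mathcal{H}_0(t)}\alpha_j/(R_{j-1}+1)$; and (ii) if the testing levels satisfy $\widehat{\mathrm{FDP}}^{\mathrm{pS\text{-}RAI}}(t)\le\alpha$ a.s. for every $t$, then $\mathrm{FDR}(t)\le\alpha$ for all $t$.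
   Context: Let $\alpha\in(0,1)$ be a target level. Hypotheses are indexed by $t=1,2,\dots$; $\theta_t\in\{0,1\}$ is a fixed (non-random) indicator with $\theta_t=0$ iff the $t$-th null hypothesis is true. $p_1,p_2,\dots$ are $[0,1]$-valued random variables (p-values). Testing levels $\alpha_1,\alpha_2,\dots$ are $[0,1]$-valued random variables and the decisions are $\delta_t=\mathbb{1}\{p_t\le\alpha_t\}$. Let $\mathcal{F}_t=\sigma(\delta_1,\dots,\delta_t)$, $\mathcal{F}_0$ trivial; each $\alpha_t$ is required to be $\mathcal{F}_{t-1}$-measurable. $R_t=\sum_{j=1}^t\delta_j$, $R_0=0$. $\mathcal{H}_0(t)=\{j\le t:\theta_j=0\}$. $\mathrm{FDR}(t)=\mathbb{E}\big[\sum_{j\in\mathcal{H}_0(t)}\delta_j/(R_t\vee 1)\big]$. *)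

theory Defs
  imports "HOL-Probability.Probability"
begin

text \<open>Online multiple testing. Hypotheses indexed by t = 1, 2, ...; index 0 is unused.
  p t = p-value, alpha t = testing level, theta t = 0 iff t-th null is true.\<close>

definition delta :: "(nat \<Rightarrow> 'a \<Rightarrow> real) \<Rightarrow> (nat \<Rightarrow> 'a \<Rightarrow> real) \<Rightarrow> nat \<Rightarrow> 'a \<Rightarrow> real" where
  "delta p alpha t \<omega> = (if p t \<omega> \<le> alpha t \<omega> then 1 else 0)"

definition rejections :: "(nat \<Rightarrow> 'a \<Rightarrow> real) \<Rightarrow> (nat \<Rightarrow> 'a \<Rightarrow> real) \<Rightarrow> nat \<Rightarrow> 'a \<Rightarrow> real" where
  "rejections p alpha t \<omega> = (\<Sum>j = 1..t. delta p alpha j \<omega>)"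

text \<open>F_t = sigma(delta_1, ..., delta_t); F_0 is trivial. Since each delta_j is {0,1}-valued,
  sigma(delta_j) is generated by the event {p_j <= alpha_j}.\<close>
definition filt :: "'a measure \<Rightarrow> (nat \<Rightarrow> 'a \<Rightarrow> real) \<Rightarrow> (nat \<Rightarrow> 'a \<Rightarrow> real) \<Rightarrow> nat \<Rightarrow> 'a measure" where
  "filt M p alpha t = sigma (space M) {{\<omega> \<in> space M. p j \<omega> \<le> alpha j \<omega>} | j. j \<in> {1..t}}"

definition H0 :: "(nat \<Rightarrow> nat) \<Rightarrow> nat \<Rightarrow> nat set" where
  "H0 theta t = {j \<in> {1..t}. theta j = 0}"

definition FDR :: "'a measure \<Rightarrow> (nat \<Rightarrow> nat) \<Rightarrow> (nat \<Rightarrow> 'a \<Rightarrow> real) \<Rightarrow> (nat \<Rightarrow> 'a \<Rightarrow> real) \<Rightarrow> nat \<Rightarrow> real" where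
  "FDR M theta p alpha t =
     (\<integral>\<omega>. (\<Sum>j\<in>H0 theta t. delta p alpha j \<omega>) / max (rejections p alpha t \<omega>) 1 \<partial>M)"

definition FDPhat_pLRAI :: "(nat \<Rightarrow> 'a \<Rightarrow> real) \<Rightarrow> (nat \<Rightarrow> 'a \<Rightarrow> real) \<Rightarrow> nat \<Rightarrow> 'a \<Rightarrow> real" where
  "FDPhat_pLRAI p alpha t \<omega> = (\<Sum>j = 1..t. alpha j \<omega> / (rejections p alpha (j - 1) \<omega> + 1))"

definition FDPhat_pSRAI :: "(nat \<Rightarrow> 'a \<Rightarrow> real) \<Rightarrow> (nat \<Rightarrow> 'a \<Rightarrow> real) \<Rightarrow> (nat \<Rightarrow> 'a \<Rightarrow> real) \<Rightarrow> nat \<Rightarrow> 'a \<Rightarrow> real" where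
  "FDPhat_pSRAI p alpha lam t \<omega> =
     (\<Sum>j = 1..t. alpha j \<omega> / (rejections p alpha (j - 1) \<omega> + 1)
        * ((if p j \<omega> > lam j \<omega> then 1 else 0) / (1 - lam j \<omega>)))"

definition FDPstar_e :: "(nat \<Rightarrow> nat) \<Rightarrow> (nat \<Rightarrow> 'a \<Rightarrow> real) \<Rightarrow> (nat \<Rightarrow> 'a \<Rightarrow> real) \<Rightarrow> nat \<Rightarrow> 'a \<Rightarrow> real" where
  "FDPstar_e theta p alpha t \<omega> = (\<Sum>j\<in>H0 theta t. alpha j \<omega> / (rejections p alpha (j - 1) \<omega> + 1))"

end

theory Submission
  imports Defs
begin

text \<open>If the j-th hypothesis is rejected then R(t) \<ge> R(j-1) + 1, so the false discovery proportion
  at time t is at most the sum over true nulls j \<le> t of delta(j) / (R(j-1) + 1). The weight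
  1 / (R(j-1) + 1) is F(j-1)-measurable, so conditional super-uniformity at U = alpha(j) replaces
  delta(j) by alpha(j) in expectation: FDR(t) \<le> E[FDP*_e(t)]. The pL-RAI estimate dominates FDP*_e
  pointwise. The pS-RAI estimate dominates it in expectation, because super-uniformity at
  U = lam(j) gives E[h (1 - lam(j))] \<le> E[h 1{p(j) > lam(j)}] for every nonnegative
  F(j-1)-measurable h.\<close>

lemma space_filt [simp]: "space (filt M p alpha t) = space M"
  unfolding filt_def by (simp add: space_measure_of_conv)

lemma sets_filt:
  "sets (filt M p alpha t) = sigma_sets (space M) {{\<omega> \<in> space M. p j \<omega> \<le> alpha j \<omega>} | j. j \<in> {1..t}}"
  unfolding filt_def by (rule sets_measure_of) auto

lemma delta_measurable_filt:
  assumes "1 \<le> j" "j \<le> t"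
  shows "delta p alpha j \<in> borel_measurable (filt M p alpha t)"
proof -
  have "{\<omega> \<in> space M. p j \<omega> \<le> alpha j \<omega>} \<in> sets (filt M p alpha t)"
    unfolding sets_filt using assms by (intro sigma_sets.Basic) auto
  then have "indicator {\<omega> \<in> space M. p j \<omega> \<le> alpha j \<omega>} \<in> borel_measurable (filt M p alpha t)"
    by (rule borel_measurable_indicator)
  then show ?thesis
    by (rule measurable_cong[THEN iffD1, rotated]) (auto simp: delta_def indicator_def)
qed

lemma rejections_measurable_filt: "rejections p alpha t \<in> borel_measurable (filt M p alpha t)"
  unfolding rejections_def[abs_def] by (intro borel_measurable_sum delta_measurable_filt) auto

lemma rejections_nonneg: "0 \<le> rejections p alpha t \<omega>"
  unfolding rejections_def delta_def by (intro sum_nonneg) auto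

lemma rejections_mono: "j \<le> t \<Longrightarrow> rejections p alpha j \<omega> \<le> rejections p alpha t \<omega>"
  unfolding rejections_def delta_def by (intro sum_mono2) auto

lemma rejections_Suc:
  "rejections p alpha (Suc t) \<omega> = rejections p alpha t \<omega> + delta p alpha (Suc t) \<omega>"
  unfolding rejections_def by simp

lemma FDP_le_sum_delta_div_rejections:
  "(\<Sum>j\<in>H0 theta t. delta p alpha j \<omega>) / max (rejections p alpha t \<omega>) 1
     \<le> (\<Sum>j\<in>H0 theta t. delta p alpha j \<omega> / (rejections p alpha (j - 1) \<omega> + 1))"
  unfolding sum_divide_distrib
proof (rule sum_mono)
  fix j assume "j \<in> H0 theta t"
  then obtain k where j: "j = Suc k" "j \<le> t" by (cases j) (auto simp: H0_def)
  show "delta p alpha j \<omega> / max (rejections p alpha t \<omega>) 1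
      \<le> delta p alpha j \<omega> / (rejections p alpha (j - 1) \<omega> + 1)"
  proof (cases "p j \<omega> \<le> alpha j \<omega>")
    case True
    then have "rejections p alpha (j - 1) \<omega> + 1 = rejections p alpha j \<omega>"
      using j rejections_Suc[of p alpha k \<omega>] by (simp add: delta_def)
    also have "\<dots> \<le> rejections p alpha t \<omega>"
      using j(2) by (rule rejections_mono)
    finally show ?thesis
      using True rejections_nonneg[of p alpha "j - 1" \<omega>] by (auto simp: delta_def intro!: divide_left_mono)
  qed (simp add: delta_def)
qed

lemma FDPstar_e_le_FDPhat_pLRAI:
  assumes "\<And>j. 1 \<le> j \<Longrightarrow> 0 \<le> alpha j \<omega>"
  shows "FDPstar_e theta p alpha t \<omega> \<le> FDPhat_pLRAI p alpha t \<omega>"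
  unfolding FDPstar_e_def FDPhat_pLRAI_def
  by (rule sum_mono2) (auto simp: H0_def intro!: divide_nonneg_pos assms add_nonneg_pos rejections_nonneg)

lemma nn_integral_ennreal_sum:
  assumes "finite A" "\<And>j. j \<in> A \<Longrightarrow> f j \<in> borel_measurable M"
    "\<And>j \<omega>. j \<in> A \<Longrightarrow> \<omega> \<in> space M \<Longrightarrow> 0 \<le> f j \<omega>"
  shows "(\<integral>\<^sup>+\<omega>. ennreal (\<Sum>j\<in>A. f j \<omega>) \<partial>M) = (\<Sum>j\<in>A. \<integral>\<^sup>+\<omega>. ennreal (f j \<omega>) \<partial>M)"
proof -
  have "(\<integral>\<^sup>+\<omega>. ennreal (\<Sum>j\<in>A. f j \<omega>) \<partial>M) = (\<integral>\<^sup>+\<omega>. (\<Sum>j\<in>A. ennreal (f j \<omega>)) \<partial>M)"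
    by (rule nn_integral_cong) (use assms(3) in \<open>simp add: sum_ennreal\<close>)
  also have "\<dots> = (\<Sum>j\<in>A. \<integral>\<^sup>+\<omega>. ennreal (f j \<omega>) \<partial>M)"
    by (rule nn_integral_sum) (use assms(2) in auto)
  finally show ?thesis .
qed

context finite_measure_subalgebra
begin

lemma nn_cond_exp_eq_real_cond_exp:
  assumes [measurable]: "f \<in> borel_measurable M"
    and f01: "\<And>x. x \<in> space M \<Longrightarrow> 0 \<le> f x \<and> f x \<le> 1"
  shows "AE x in M. nn_cond_exp M F (\<lambda>x. ennreal (f x)) x = ennreal (real_cond_exp M F f x)"
proof -
  have "AE x in M. nn_cond_exp M F (\<lambda>x. ennreal (- f x)) x = nn_cond_exp M F (\<lambda>x. 0) x"
    by (rule nn_cond_exp_cong) (use f01 in \<open>auto simp: ennreal_neg\<close>)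
  moreover have "AE x in M. 0 = nn_cond_exp M F (\<lambda>x. 0) x"
    by (rule nn_cond_exp_F_meas) simp
  moreover have "AE x in M. nn_cond_exp M F (\<lambda>x. ennreal (f x)) x \<le> nn_cond_exp M F (\<lambda>x. 1) x"
    by (rule nn_cond_exp_mono) (use f01 in auto)
  moreover have "AE x in M. 1 = nn_cond_exp M F (\<lambda>x. 1) x"
    by (rule nn_cond_exp_F_meas) simp
  ultimately show ?thesis
    unfolding real_cond_exp_def by eventually_elim (auto simp: ennreal_enn2real_if top_unique)
qed

lemma nn_integral_mult_real_cond_exp:
  assumes [measurable]: "h \<in> borel_measurable F" "f \<in> borel_measurable M"
    and f01: "\<And>x. x \<in> space M \<Longrightarrow> 0 \<le> f x \<and> f x \<le> 1"
  shows "(\<integral>\<^sup>+x. h x * ennreal (real_cond_exp M F f x) \<partial>M) = (\<integral>\<^sup>+x. h x * ennreal (f x) \<partial>M)"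
proof -
  have "(\<integral>\<^sup>+x. h x * ennreal (real_cond_exp M F f x) \<partial>M)
      = (\<integral>\<^sup>+x. h x * nn_cond_exp M F (\<lambda>x. ennreal (f x)) x \<partial>M)"
    using nn_cond_exp_eq_real_cond_exp[OF assms(2) f01]
    by (intro nn_integral_cong_AE) (auto elim: eventually_mono)
  also have "\<dots> = (\<integral>\<^sup>+x. h x * ennreal (f x) \<partial>M)"
    by (rule nn_cond_exp_intg) auto
  finally show ?thesis .
qed

lemma real_cond_exp_indicator_Compl:
  assumes "S \<in> sets M"
  shows "AE x in M. real_cond_exp M F (indicator (space M - S)) x = 1 - real_cond_exp M F (indicator S) x"
proof -
  have "integrable M (indicator S :: 'a \<Rightarrow> real)"
    using assms by (intro integrable_real_indicator) (auto simp: less_top[symmetric])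
  then have "AE x in M. real_cond_exp M F (\<lambda>x. 1 - indicator S x) x
      = real_cond_exp M F (\<lambda>x. 1) x - real_cond_exp M F (indicator S) x"
    by (intro real_cond_exp_diff) auto
  moreover have "AE x in M. real_cond_exp M F (\<lambda>x. 1) x = 1"
    by (rule real_cond_exp_F_meas) auto
  moreover have "AE x in M. real_cond_exp M F (indicator (space M - S)) x
      = real_cond_exp M F (\<lambda>x. 1 - indicator S x) x"
    by (rule real_cond_exp_cong) (use assms in \<open>auto simp: indicator_def\<close>)
  ultimately show ?thesis by eventually_elim simp
qed

lemma nn_integral_indicator_le_of_real_cond_exp_le:
  assumes [measurable]: "S \<in> sets M" "h \<in> borel_measurable F"
    and "AE x in M. real_cond_exp M F (indicator S) x \<le> U x"
  shows "(\<integral>\<^sup>+x. h x * indicator S x \<partial>M) \<le> (\<integral>\<^sup>+x. h x * ennreal (U x) \<partial>M)"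
proof -
  have "(\<integral>\<^sup>+x. h x * indicator S x \<partial>M) = (\<integral>\<^sup>+x. h x * ennreal (real_cond_exp M F (indicator S) x) \<partial>M)"
    by (subst nn_integral_mult_real_cond_exp) (auto simp: ennreal_indicator)
  also have "\<dots> \<le> (\<integral>\<^sup>+x. h x * ennreal (U x) \<partial>M)"
    using assms(3) by (intro nn_integral_mono_AE) (auto elim!: eventually_mono intro!: mult_left_mono ennreal_leI)
  finally show ?thesis .
qed

lemma nn_integral_indicator_Compl_ge_of_real_cond_exp_le:
  assumes [measurable]: "S \<in> sets M" "h \<in> borel_measurable F"
    and "AE x in M. real_cond_exp M F (indicator S) x \<le> U x"
  shows "(\<integral>\<^sup>+x. h x * ennreal (1 - U x) \<partial>M) \<le> (\<integral>\<^sup>+x. h x * indicator (space M - S) x \<partial>M)"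
proof -
  have "(\<integral>\<^sup>+x. h x * ennreal (1 - U x) \<partial>M)
      \<le> (\<integral>\<^sup>+x. h x * ennreal (real_cond_exp M F (indicator (space M - S)) x) \<partial>M)"
    using assms(3) real_cond_exp_indicator_Compl[OF assms(1)]
    by (intro nn_integral_mono_AE) (auto elim!: eventually_elim2 intro!: mult_left_mono ennreal_leI)
  also have "\<dots> = (\<integral>\<^sup>+x. h x * indicator (space M - S) x \<partial>M)"
    by (subst nn_integral_mult_real_cond_exp) (auto simp: ennreal_indicator)
  finally show ?thesis .
qed

end

locale online_testing = prob_space M
  for M :: "'a measure" and theta :: "nat \<Rightarrow> nat" and p alpha :: "nat \<Rightarrow> 'a \<Rightarrow> real" +
  assumes p_measurable: "1 \<le> t \<Longrightarrow> p t \<in> borel_measurable M"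
    and alpha_measurable: "1 \<le> t \<Longrightarrow> alpha t \<in> borel_measurable M"
    and alpha_predictable: "1 \<le> t \<Longrightarrow> alpha t \<in> borel_measurable (filt M p alpha (t - 1))"
    and alpha_bounds: "1 \<le> t \<Longrightarrow> \<omega> \<in> space M \<Longrightarrow> 0 \<le> alpha t \<omega> \<and> alpha t \<omega> \<le> 1"
    and super_uniform: "1 \<le> t \<Longrightarrow> theta t = 0 \<Longrightarrow> U \<in> borel_measurable (filt M p alpha (t - 1))
      \<Longrightarrow> (\<And>\<omega>. \<omega> \<in> space M \<Longrightarrow> 0 \<le> U \<omega> \<and> U \<omega> \<le> 1)
      \<Longrightarrow> AE \<omega> in M. real_cond_exp M (filt M p alpha (t - 1)) (indicator {\<omega>\<in>space M. p t \<omega> \<le> U \<omega>}) \<omega> \<le> U \<omega>"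
begin

lemma subalgebra_filt: "subalgebra M (filt M p alpha t)"
  unfolding subalgebra_def
proof
  have "{{\<omega> \<in> space M. p j \<omega> \<le> alpha j \<omega>} | j. j \<in> {1..t}} \<subseteq> sets M"
    using p_measurable alpha_measurable by auto
  then show "sets (filt M p alpha t) \<subseteq> sets M"
    unfolding sets_filt by (rule sets.sigma_sets_subset)
qed simp

lemma finite_measure_subalgebra_filt: "finite_measure_subalgebra M (filt M p alpha t)"
  by unfold_locales (use subalgebra_filt in \<open>auto simp: subalgebra_def\<close>)

lemma rejections_measurable: "rejections p alpha t \<in> borel_measurable M"
  using subalgebra_filt rejections_measurable_filt by (rule measurable_from_subalg)

lemma delta_measurable: "1 \<le> j \<Longrightarrow> delta p alpha j \<in> borel_measurable M"
  using subalgebra_filt delta_measurable_filt by (rule measurable_from_subalg) auto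

lemma alpha_div_rejections_nonneg:
  "1 \<le> j \<Longrightarrow> \<omega> \<in> space M \<Longrightarrow> 0 \<le> alpha j \<omega> / (rejections p alpha (j - 1) \<omega> + 1)"
  using alpha_bounds[of j \<omega>] rejections_nonneg[of p alpha "j - 1" \<omega>] by simp

lemma expected_delta_div_rejections_le_null:
  assumes j: "1 \<le> j" and null: "theta j = 0"
  shows "(\<integral>\<^sup>+\<omega>. ennreal (delta p alpha j \<omega> / (rejections p alpha (j - 1) \<omega> + 1)) \<partial>M)
    \<le> (\<integral>\<^sup>+\<omega>. ennreal (alpha j \<omega> / (rejections p alpha (j - 1) \<omega> + 1)) \<partial>M)"
proof -
  let ?h = "\<lambda>\<omega>. ennreal (1 / (rejections p alpha (j - 1) \<omega> + 1))"
  have h_measurable: "?h \<in> borel_measurable (filt M p alpha (j - 1))"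
    using rejections_measurable_filt by measurable
  have "(\<integral>\<^sup>+\<omega>. ennreal (delta p alpha j \<omega> / (rejections p alpha (j - 1) \<omega> + 1)) \<partial>M)
      = (\<integral>\<^sup>+\<omega>. ?h \<omega> * indicator {\<omega>\<in>space M. p j \<omega> \<le> alpha j \<omega>} \<omega> \<partial>M)"
    by (rule nn_integral_cong) (simp add: delta_def indicator_def)
  also have "\<dots> \<le> (\<integral>\<^sup>+\<omega>. ?h \<omega> * ennreal (alpha j \<omega>) \<partial>M)"
    using p_measurable[OF j] alpha_measurable[OF j] alpha_bounds[OF j]
    by (intro finite_measure_subalgebra.nn_integral_indicator_le_of_real_cond_exp_le[OF
          finite_measure_subalgebra_filt _ h_measurable]
        super_uniform[OF j null alpha_predictable[OF j]]) auto
  also have "\<dots> = (\<integral>\<^sup>+\<omega>. ennreal (alpha j \<omega> / (rejections p alpha (j - 1) \<omega> + 1)) \<partial>M)"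
    using alpha_bounds[OF j] rejections_nonneg
    by (intro nn_integral_cong) (auto simp: ennreal_mult''[symmetric])
  finally show ?thesis .
qed

lemma expected_FDP_le_FDPstar_e:
  "(\<integral>\<^sup>+\<omega>. ennreal ((\<Sum>j\<in>H0 theta t. delta p alpha j \<omega>) / max (rejections p alpha t \<omega>) 1) \<partial>M)
    \<le> (\<integral>\<^sup>+\<omega>. ennreal (FDPstar_e theta p alpha t \<omega>) \<partial>M)"
proof -
  have H0: "finite (H0 theta t)" "\<And>j. j \<in> H0 theta t \<Longrightarrow> 1 \<le> j \<and> theta j = 0"
    by (auto simp: H0_def)
  have "(\<integral>\<^sup>+\<omega>. ennreal ((\<Sum>j\<in>H0 theta t. delta p alpha j \<omega>) / max (rejections p alpha t \<omega>) 1) \<partial>M)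
      \<le> (\<integral>\<^sup>+\<omega>. ennreal (\<Sum>j\<in>H0 theta t. delta p alpha j \<omega> / (rejections p alpha (j - 1) \<omega> + 1)) \<partial>M)"
    by (intro nn_integral_mono ennreal_leI FDP_le_sum_delta_div_rejections)
  also have "\<dots> = (\<Sum>j\<in>H0 theta t. \<integral>\<^sup>+\<omega>. ennreal (delta p alpha j \<omega> / (rejections p alpha (j - 1) \<omega> + 1)) \<partial>M)"
  proof (intro nn_integral_ennreal_sum)
    fix j \<omega>
    show "0 \<le> delta p alpha j \<omega> / (rejections p alpha (j - 1) \<omega> + 1)"
      using rejections_nonneg[of p alpha "j - 1" \<omega>] by (simp add: delta_def)
  qed (use H0 delta_measurable rejections_measurable in auto)
  also have "\<dots> \<le> (\<Sum>j\<in>H0 theta t. \<integral>\<^sup>+\<omega>. ennreal (alpha j \<omega> / (rejections p alpha (j - 1) \<omega> + 1)) \<partial>M)"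
    using H0 by (intro sum_mono expected_delta_div_rejections_le_null) auto
  also have "\<dots> = (\<integral>\<^sup>+\<omega>. ennreal (FDPstar_e theta p alpha t \<omega>) \<partial>M)"
    unfolding FDPstar_e_def using H0 alpha_measurable rejections_measurable alpha_div_rejections_nonneg
    by (intro nn_integral_ennreal_sum[symmetric]) auto
  finally show ?thesis .
qed

lemma FDR_le_expected_FDPstar_e:
  "ennreal (FDR M theta p alpha t) \<le> (\<integral>\<^sup>+\<omega>. ennreal (FDPstar_e theta p alpha t \<omega>) \<partial>M)"
proof -
  let ?FDP = "\<lambda>\<omega>. (\<Sum>j\<in>H0 theta t. delta p alpha j \<omega>) / max (rejections p alpha t \<omega>) 1"
  have "?FDP \<in> borel_measurable M"
    using delta_measurable rejections_measurable by (auto simp: H0_def)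
  moreover have "AE \<omega> in M. 0 \<le> ?FDP \<omega>"
    by (intro AE_I2 divide_nonneg_pos sum_nonneg) (auto simp: delta_def)
  ultimately have "ennreal (FDR M theta p alpha t) \<le> (\<integral>\<^sup>+\<omega>. ennreal (?FDP \<omega>) \<partial>M)"
    unfolding FDR_def by (simp add: integral_eq_nn_integral ennreal_enn2real_if)
  also have "\<dots> \<le> (\<integral>\<^sup>+\<omega>. ennreal (FDPstar_e theta p alpha t \<omega>) \<partial>M)"
    by (rule expected_FDP_le_FDPstar_e)
  finally show ?thesis .
qed

lemma FDR_le_of_dominating_estimate:
  assumes "(\<integral>\<^sup>+\<omega>. ennreal (FDPstar_e theta p alpha t \<omega>) \<partial>M) \<le> (\<integral>\<^sup>+\<omega>. ennreal (X \<omega>) \<partial>M)"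
    and "AE \<omega> in M. X \<omega> \<le> a" and "0 \<le> a"
  shows "FDR M theta p alpha t \<le> a"
proof -
  have "ennreal (FDR M theta p alpha t) \<le> (\<integral>\<^sup>+\<omega>. ennreal (X \<omega>) \<partial>M)"
    using FDR_le_expected_FDPstar_e assms(1) by (rule order_trans)
  also have "\<dots> \<le> (\<integral>\<^sup>+\<omega>. ennreal a \<partial>M)"
    using assms(2) by (intro nn_integral_mono_AE) (auto elim: eventually_mono intro: ennreal_leI)
  also have "\<dots> = ennreal a"
    by (simp add: emeasure_space_1)
  finally show ?thesis
    using assms(3) by simp
qed

lemma FDR_le_of_FDPhat_pLRAI_le:
  assumes "AE \<omega> in M. FDPhat_pLRAI p alpha t \<omega> \<le> a" and "0 \<le> a"
  shows "FDR M theta p alpha t \<le> a"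
proof (rule FDR_le_of_dominating_estimate[OF _ assms])
  show "(\<integral>\<^sup>+\<omega>. ennreal (FDPstar_e theta p alpha t \<omega>) \<partial>M) \<le> (\<integral>\<^sup>+\<omega>. ennreal (FDPhat_pLRAI p alpha t \<omega>) \<partial>M)"
    using alpha_bounds by (intro nn_integral_mono ennreal_leI FDPstar_e_le_FDPhat_pLRAI) blast
qed

context
  fixes lam :: "nat \<Rightarrow> 'a \<Rightarrow> real"
  assumes lam_predictable: "1 \<le> t \<Longrightarrow> lam t \<in> borel_measurable (filt M p alpha (t - 1))"
    and lam_bounds: "1 \<le> t \<Longrightarrow> \<omega> \<in> space M \<Longrightarrow> 0 < lam t \<omega> \<and> lam t \<omega> < 1"
begin

lemma lam_measurable: "1 \<le> t \<Longrightarrow> lam t \<in> borel_measurable M"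
  using subalgebra_filt lam_predictable by (rule measurable_from_subalg)

lemma expected_alpha_div_rejections_le_null:
  assumes j: "1 \<le> j" and null: "theta j = 0"
  shows "(\<integral>\<^sup>+\<omega>. ennreal (alpha j \<omega> / (rejections p alpha (j - 1) \<omega> + 1)) \<partial>M)
    \<le> (\<integral>\<^sup>+\<omega>. ennreal (alpha j \<omega> / (rejections p alpha (j - 1) \<omega> + 1)
          * ((if p j \<omega> > lam j \<omega> then 1 else 0) / (1 - lam j \<omega>))) \<partial>M)"
proof -
  let ?h = "\<lambda>\<omega>. ennreal (alpha j \<omega> / (rejections p alpha (j - 1) \<omega> + 1) / (1 - lam j \<omega>))"
  have h_measurable: "?h \<in> borel_measurable (filt M p alpha (j - 1))"
    using rejections_measurable_filt alpha_predictable[OF j] lam_predictable[OF j] by measurable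
  have "(\<integral>\<^sup>+\<omega>. ennreal (alpha j \<omega> / (rejections p alpha (j - 1) \<omega> + 1)) \<partial>M)
      = (\<integral>\<^sup>+\<omega>. ?h \<omega> * ennreal (1 - lam j \<omega>) \<partial>M)"
  proof (rule nn_integral_cong)
    fix \<omega> assume \<omega>: "\<omega> \<in> space M"
    have "?h \<omega> * ennreal (1 - lam j \<omega>)
        = ennreal (alpha j \<omega> / (rejections p alpha (j - 1) \<omega> + 1) / (1 - lam j \<omega>) * (1 - lam j \<omega>))"
      using lam_bounds[OF j \<omega>] by (subst ennreal_mult''[symmetric]) auto
    also have "\<dots> = ennreal (alpha j \<omega> / (rejections p alpha (j - 1) \<omega> + 1))"
      using lam_bounds[OF j \<omega>] by simp
    finally show "ennreal (alpha j \<omega> / (rejections p alpha (j - 1) \<omega> + 1)) = ?h \<omega> * ennreal (1 - lam j \<omega>)" ..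
  qed
  also have "\<dots> \<le> (\<integral>\<^sup>+\<omega>. ?h \<omega> * indicator (space M - {\<omega>\<in>space M. p j \<omega> \<le> lam j \<omega>}) \<omega> \<partial>M)"
    using p_measurable[OF j] lam_measurable[OF j] lam_bounds[OF j]
    by (intro finite_measure_subalgebra.nn_integral_indicator_Compl_ge_of_real_cond_exp_le[OF
          finite_measure_subalgebra_filt _ h_measurable]
        super_uniform[OF j null lam_predictable[OF j]]) (auto simp: less_imp_le)
  also have "\<dots> = (\<integral>\<^sup>+\<omega>. ennreal (alpha j \<omega> / (rejections p alpha (j - 1) \<omega> + 1)
          * ((if p j \<omega> > lam j \<omega> then 1 else 0) / (1 - lam j \<omega>))) \<partial>M)"
    by (rule nn_integral_cong) (simp add: indicator_def not_le)
  finally show ?thesis .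
qed

lemma expected_FDPstar_e_le_FDPhat_pSRAI:
  "(\<integral>\<^sup>+\<omega>. ennreal (FDPstar_e theta p alpha t \<omega>) \<partial>M)
    \<le> (\<integral>\<^sup>+\<omega>. ennreal (FDPhat_pSRAI p alpha lam t \<omega>) \<partial>M)"
proof -
  let ?T = "\<lambda>j \<omega>. alpha j \<omega> / (rejections p alpha (j - 1) \<omega> + 1)
    * ((if p j \<omega> > lam j \<omega> then 1 else 0) / (1 - lam j \<omega>))"
  have H0: "finite (H0 theta t)" "H0 theta t \<subseteq> {1..t}"
    "\<And>j. j \<in> H0 theta t \<Longrightarrow> 1 \<le> j \<and> theta j = 0"
    by (auto simp: H0_def)
  have "(\<integral>\<^sup>+\<omega>. ennreal (FDPstar_e theta p alpha t \<omega>) \<partial>M)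
      = (\<Sum>j\<in>H0 theta t. \<integral>\<^sup>+\<omega>. ennreal (alpha j \<omega> / (rejections p alpha (j - 1) \<omega> + 1)) \<partial>M)"
    unfolding FDPstar_e_def using H0 alpha_measurable rejections_measurable alpha_div_rejections_nonneg
    by (intro nn_integral_ennreal_sum) auto
  also have "\<dots> \<le> (\<Sum>j\<in>H0 theta t. \<integral>\<^sup>+\<omega>. ennreal (?T j \<omega>) \<partial>M)"
    using H0 by (intro sum_mono expected_alpha_div_rejections_le_null) auto
  also have "\<dots> \<le> (\<Sum>j\<in>{1..t}. \<integral>\<^sup>+\<omega>. ennreal (?T j \<omega>) \<partial>M)"
    using H0 by (intro sum_mono2) auto
  also have "\<dots> = (\<integral>\<^sup>+\<omega>. ennreal (FDPhat_pSRAI p alpha lam t \<omega>) \<partial>M)"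
    unfolding FDPhat_pSRAI_def
  proof (intro nn_integral_ennreal_sum[symmetric])
    fix j \<omega> assume "j \<in> {1..t}" "\<omega> \<in> space M"
    then show "0 \<le> ?T j \<omega>"
      using alpha_bounds[of j \<omega>] rejections_nonneg[of p alpha "j - 1" \<omega>] lam_bounds[of j \<omega>] by simp
  qed (use alpha_measurable rejections_measurable lam_measurable p_measurable in auto)
  finally show ?thesis .
qed

lemma FDR_le_of_FDPhat_pSRAI_le:
  assumes "AE \<omega> in M. FDPhat_pSRAI p alpha lam t \<omega> \<le> a" and "0 \<le> a"
  shows "FDR M theta p alpha t \<le> a"
  using expected_FDPstar_e_le_FDPhat_pSRAI assms by (rule FDR_le_of_dominating_estimate)

end

end

theorem proposition4:
  fixes M :: "'a measure" and p alpha lam :: "nat \<Rightarrow> 'a \<Rightarrow> real"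
    and theta :: "nat \<Rightarrow> nat" and a :: real
  assumes "prob_space M"
    and "0 < a" and "a < 1"
    and "\<forall>t. theta t \<in> {0, 1}"
    and "\<forall>t\<ge>1. p t \<in> borel_measurable M \<and> (\<forall>\<omega>\<in>space M. 0 \<le> p t \<omega> \<and> p t \<omega> \<le> 1)"
    and "\<forall>t\<ge>1. alpha t \<in> borel_measurable M \<and> alpha t \<in> borel_measurable (filt M p alpha (t - 1))
           \<and> (\<forall>\<omega>\<in>space M. 0 \<le> alpha t \<omega> \<and> alpha t \<omega> \<le> 1)"
    and superunif: "\<forall>t\<ge>1. theta t = 0 \<longrightarrow>
           (\<forall>U. U \<in> borel_measurable (filt M p alpha (t - 1)) \<and> (\<forall>\<omega>\<in>space M. 0 \<le> U \<omega> \<and> U \<omega> \<le> 1)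
              \<longrightarrow> (AE \<omega> in M. real_cond_exp M (filt M p alpha (t - 1))
                      (indicator {\<omega>\<in>space M. p t \<omega> \<le> U \<omega>}) \<omega> \<le> U \<omega>))"
  shows "((\<forall>t\<ge>1. AE \<omega> in M. FDPhat_pLRAI p alpha t \<omega> \<le> a)
            \<longrightarrow> (\<forall>t\<ge>1. FDR M theta p alpha t \<le> a))
       \<and> ((\<forall>t\<ge>1. lam t \<in> borel_measurable (filt M p alpha (t - 1))
                  \<and> (\<forall>\<omega>\<in>space M. 0 < lam t \<omega> \<and> lam t \<omega> < 1))
            \<longrightarrow> (\<forall>t\<ge>1. (\<integral>\<^sup>+\<omega>. ennreal (FDPhat_pSRAI p alpha lam t \<omega>) \<partial>M)
                          \<ge> (\<integral>\<^sup>+\<omega>. ennreal (FDPstar_e theta p alpha t \<omega>) \<partial>M))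
              \<and> ((\<forall>t\<ge>1. AE \<omega> in M. FDPhat_pSRAI p alpha lam t \<omega> \<le> a)
                   \<longrightarrow> (\<forall>t\<ge>1. FDR M theta p alpha t \<le> a)))"
proof -
  interpret online_testing M theta p alpha
  proof (intro online_testing.intro online_testing_axioms.intro)
    show "prob_space M" by fact
  next
    fix t and U :: "'a \<Rightarrow> real"
    assume "1 \<le> t" "theta t = 0" "U \<in> borel_measurable (filt M p alpha (t - 1))"
      "\<And>\<omega>. \<omega> \<in> space M \<Longrightarrow> 0 \<le> U \<omega> \<and> U \<omega> \<le> 1"
    then show "AE \<omega> in M. real_cond_exp M (filt M p alpha (t - 1))
        (indicator {\<omega>\<in>space M. p t \<omega> \<le> U \<omega>}) \<omega> \<le> U \<omega>"
      using superunif by blast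
  qed (use assms(5,6) in auto)
  show ?thesis
  proof (intro conjI impI allI)
    show "FDR M theta p alpha t \<le> a" if "\<forall>t\<ge>1. AE \<omega> in M. FDPhat_pLRAI p alpha t \<omega> \<le> a" "1 \<le> t" for t
      using that \<open>0 < a\<close> by (intro FDR_le_of_FDPhat_pLRAI_le) auto
  next
    fix t assume lam: "\<forall>t\<ge>1. lam t \<in> borel_measurable (filt M p alpha (t - 1))
                \<and> (\<forall>\<omega>\<in>space M. 0 < lam t \<omega> \<and> lam t \<omega> < 1)"
    show "(\<integral>\<^sup>+\<omega>. ennreal (FDPstar_e theta p alpha t \<omega>) \<partial>M)
        \<le> (\<integral>\<^sup>+\<omega>. ennreal (FDPhat_pSRAI p alpha lam t \<omega>) \<partial>M)"
      by (rule expected_FDPstar_e_le_FDPhat_pSRAI) (use lam in auto)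
    show "FDR M theta p alpha t \<le> a" if "\<forall>t\<ge>1. AE \<omega> in M. FDPhat_pSRAI p alpha lam t \<omega> \<le> a" "1 \<le> t"
      by (rule FDR_le_of_FDPhat_pSRAI_le) (use lam that \<open>0 < a\<close> in auto)
  qed
qed

end
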